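(* Let $n\ge2$ and let $\mathrm{Alt}(n)$ act naturally on $X=\{1,\ldots,n\}$; this action is sharply $(n-2)$-transitive. Then this $\mathrm{Alt}(n)$-set can be sequenced if and only if $n$ is even. Moreover, when $n$ is even, every enumeration of $X$ is a sequencing.
   Context: $\mathrm{Alt}(n)$ is the group of even permutations of $\{1,\ldots,n\}$. For a group $G$ acting sharply $k$-transitively on an $n$-element set $X$ (for any two ordered $k$-tuples of distinct elements there is exactly one $g\in G$ mapping the first to the second coordinatewise), a sequencing of $X$ is an enumeration $(x_1,\ldots,x_n)$ of all elements of $X$ such that the $n-k$ tuples $(x_1,\ldots,x_{k+1}),(x_2,\ldots,x_{k+2}),\ldots,(x_{n-k},\ldots,x_n)$ lie in pairwise distinct orbits of $G$ acting coordinatewise on ordered $(k+1)$-tuples of distinct elements of $X$. Here $k=n-2$. *)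

theory Defs
  imports "HOL-Combinatorics.Permutations"
begin

definition Alt :: "nat \<Rightarrow> (nat \<Rightarrow> nat) set" where
  "Alt n = {p. p permutes {1..n} \<and> evenperm p}"

definition sharply_transitive :: "('a \<Rightarrow> 'a) set \<Rightarrow> 'a set \<Rightarrow> nat \<Rightarrow> bool" where
  "sharply_transitive G X k \<longleftrightarrow>
     (\<forall>xs ys. distinct xs \<and> distinct ys \<and> length xs = k \<and> length ys = k
        \<and> set xs \<subseteq> X \<and> set ys \<subseteq> X \<longrightarrow> (\<exists>!g. g \<in> G \<and> map g xs = ys))"

definition same_orbit :: "('a \<Rightarrow> 'a) set \<Rightarrow> 'a list \<Rightarrow> 'a list \<Rightarrow> bool" where
  "same_orbit G xs ys \<longleftrightarrow> (\<exists>g\<in>G. map g xs = ys)"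

definition is_sequencing :: "('a \<Rightarrow> 'a) set \<Rightarrow> 'a set \<Rightarrow> nat \<Rightarrow> 'a list \<Rightarrow> bool" where
  "is_sequencing G X k xs \<longleftrightarrow>
     distinct xs \<and> set xs = X \<and>
     (\<forall>i < length xs - k. \<forall>j < length xs - k. i \<noteq> j \<longrightarrow>
        \<not> same_orbit G (take (k+1) (drop i xs)) (take (k+1) (drop j xs)))"

end

theory Submission
  imports Defs "HOL-Combinatorics.Cycles"
begin

(* An enumeration x1, ..., xn of {1..n} has just two windows of length n - 1, namely
   x1 ... x(n-1) and x2 ... xn.  A permutation of {1..n} is determined by its values off a
   single point, so the only permutation carrying the first window to the second is the
   n-cycle (x1 ... xn), which is even iff n is odd.  Hence the two windows share an
   Alt(n)-orbit exactly when n is odd.  Sharp (n-2)-transitivity is the same idea with two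
   points of slack: a transposition of the two free points corrects the parity, and two even
   permutations agreeing off two points coincide. *)

lemma map_permutation_of_list_zip:
  "length xs = length ys \<Longrightarrow> distinct xs \<Longrightarrow> map (permutation_of_list (zip xs ys)) xs = ys"
proof (induction xs ys rule: list_induct2)
  case (Cons x xs y ys)
  then have "map (permutation_of_list ((x, y) # zip xs ys)) xs
      = map (permutation_of_list (zip xs ys)) xs"
    by (intro map_cong) (auto simp: permutation_of_list_Cons)
  with Cons show ?case by simp
qed simp

lemma permutation_of_list_zip_permutes:
  assumes "distinct xs" "distinct ys" "set xs = S" "set ys = S"
  shows "permutation_of_list (zip xs ys) permutes S"
proof -
  have "length xs = length ys"
    using assms by (metis distinct_card)
  then show ?thesis
    using assms by (intro permutation_of_list_permutes list_permutesI) auto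
qed

lemma permutes_inv_o_of_agree:
  assumes "p permutes S" "q permutes S" "\<forall>x\<in>S - T. p x = q x"
  shows "inv q \<circ> p permutes T"
proof (rule permutes_superset)
  show "inv q \<circ> p permutes S"
    using assms by (intro permutes_compose permutes_inv)
  show "(inv q \<circ> p) x = x" if "x \<in> S - T" for x
    using that assms(3) permutes_inverses(2)[OF assms(2)] by simp
qed

lemma permutes_eq_if_inv_o_eq_id:
  assumes "q permutes S" "inv q \<circ> p = id"
  shows "p = q"
proof -
  have "p = q \<circ> (inv q \<circ> p)"
    using permutes_inv_o(1)[OF assms(1)] by (simp add: o_assoc)
  with assms(2) show ?thesis
    by simp
qed

lemma permutes_eq_if_agree_except_one:
  assumes "p permutes S" "q permutes S" "\<forall>x\<in>S - {a}. p x = q x"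
  shows "p = q"
proof (rule permutes_eq_if_inv_o_eq_id[OF assms(2)])
  show "inv q \<circ> p = id"
    using permutes_inv_o_of_agree[OF assms] by (simp only: permutes_sing)
qed

lemma evenperm_eq_if_agree_except_two:
  assumes "finite S" "p permutes S" "q permutes S" "evenperm p" "evenperm q"
    and "\<forall>x\<in>S - {a, b}. p x = q x"
  shows "p = q"
proof (rule permutes_eq_if_inv_o_eq_id[OF assms(3)])
  have "permutation p" "permutation q"
    using assms(1-3) by (simp_all add: permutes_imp_permutation)
  then have "evenperm (inv q \<circ> p)"
    using assms(4,5) by (simp add: evenperm_comp evenperm_inv permutation_inverse)
  moreover have "inv q \<circ> p permutes {a, b}"
    using permutes_inv_o_of_agree[OF assms(2,3,6)] .
  ultimately show "inv q \<circ> p = id"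
    by (auto simp: permutes_doubleton_iff evenperm_swap)
qed

lemma exists_evenperm_map:
  assumes "finite S" "distinct xs" "distinct ys" "set xs \<subseteq> S" "set ys \<subseteq> S"
    and "length xs = length ys" "length xs + 2 \<le> card S"
  shows "\<exists>p. p permutes S \<and> evenperm p \<and> map p xs = ys"
proof -
  obtain us where us: "distinct us" "set us = S - set xs"
    using finite_distinct_list assms(1) by (metis finite_Diff)
  obtain vs where vs: "distinct vs" "set vs = S - set ys"
    using finite_distinct_list assms(1) by (metis finite_Diff)
  define p where "p = permutation_of_list (zip (xs @ us) (ys @ vs))"
  have enum: "distinct (xs @ us)" "distinct (ys @ vs)" "set (xs @ us) = S" "set (ys @ vs) = S"
    using assms us vs by auto
  then have p_permutes: "p permutes S"
    unfolding p_def by (rule permutation_of_list_zip_permutes)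
  have "length (xs @ us) = length (ys @ vs)"
    using enum by (metis distinct_card)
  then have "map p (xs @ us) = ys @ vs"
    unfolding p_def using enum(1) by (rule map_permutation_of_list_zip)
  then have p_xs: "map p xs = ys"
    using assms(6) by simp
  have "length vs = card S - length ys"
    using vs assms by (metis distinct_card card_Diff_subset finite_subset)
  then have "length vs \<ge> 2"
    using assms(6,7) by simp
  then obtain b1 b2 ws where vs_eq: "vs = b1 # b2 # ws"
    by (metis One_nat_def Suc_1 Suc_le_length_iff)
  have b: "b1 \<in> S" "b2 \<in> S" "b1 \<notin> set ys" "b2 \<notin> set ys" "b1 \<noteq> b2"
    using vs vs_eq by auto
  define q where "q = (if evenperm p then p else transpose b1 b2 \<circ> p)"
  have "q permutes S"
    unfolding q_def using p_permutes b by (simp add: permutes_compose permutes_swap_id)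
  moreover have "evenperm q"
    using permutes_imp_permutation[OF assms(1) p_permutes] b(5)
    by (simp add: q_def evenperm_comp permutation_swap_id evenperm_swap)
  moreover have "map q xs = ys"
  proof -
    have "map (transpose b1 b2) ys = ys"
      using b by (intro map_idI) (auto simp: transpose_def)
    then show ?thesis
      using p_xs by (simp add: q_def flip: map_map)
  qed
  ultimately show ?thesis by blast
qed

lemma mem_Alt_iff: "g \<in> Alt n \<longleftrightarrow> g permutes {1..n} \<and> evenperm g"
  by (simp add: Alt_def)

lemma sharply_transitive_Alt:
  assumes "n \<ge> 2"
  shows "sharply_transitive (Alt n) {1..n} (n - 2)"
  unfolding sharply_transitive_def
proof (intro allI impI)
  fix xs ys :: "nat list"
  assume tuples: "distinct xs \<and> distinct ys \<and> length xs = n - 2 \<and> length ys = n - 2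
    \<and> set xs \<subseteq> {1..n} \<and> set ys \<subseteq> {1..n}"
  have "card ({1..n} - set xs) = 2"
    using tuples assms by (simp add: card_Diff_subset distinct_card)
  then obtain a b where "{1..n} - set xs = {a, b}"
    by (meson card_2_iff)
  then have xs_eq: "set xs = {1..n} - {a, b}"
    using tuples by blast
  have "\<exists>p. p permutes {1..n} \<and> evenperm p \<and> map p xs = ys"
    by (rule exists_evenperm_map) (use tuples assms in auto)
  then obtain p where "p \<in> Alt n" "map p xs = ys"
    by (auto simp: mem_Alt_iff)
  moreover have "g = h" if "g \<in> Alt n" "map g xs = ys" "h \<in> Alt n" "map h xs = ys" for g h
  proof (rule evenperm_eq_if_agree_except_two[of "{1..n}"])
    show "\<forall>x\<in>{1..n} - {a, b}. g x = h x"
      using that(2,4) xs_eq by (metis map_eq_conv)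
  qed (use that in \<open>simp_all add: mem_Alt_iff\<close>)
  ultimately show "\<exists>!g. g \<in> Alt n \<and> map g xs = ys"
    by blast
qed

lemma evenperm_cycle_of_list:
  "distinct cs \<Longrightarrow> cs \<noteq> [] \<Longrightarrow> evenperm (cycle_of_list cs) \<longleftrightarrow> odd (length cs)"
proof (induction cs rule: cycle_of_list.induct)
  case (1 i j cs)
  have "evenperm (cycle_of_list (i # j # cs))
      \<longleftrightarrow> evenperm (transpose i j) = evenperm (cycle_of_list (j # cs))"
    by (simp add: evenperm_comp permutation_swap_id permutation_of_cycle)
  also have "\<dots> \<longleftrightarrow> odd (length (i # j # cs))"
    using 1 by (simp add: evenperm_swap)
  finally show ?case .
qed auto

lemma same_orbit_Alt_sym:
  "same_orbit (Alt n) xs ys \<longleftrightarrow> same_orbit (Alt n) ys xs"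
proof -
  have "same_orbit (Alt n) ys xs" if orbit: "same_orbit (Alt n) xs ys" for xs ys
  proof -
    obtain g where g: "g permutes {1..n}" "evenperm g" "map g xs = ys"
      using orbit by (auto simp: same_orbit_def mem_Alt_iff)
    have "inv g \<in> Alt n"
      using g permutes_imp_permutation[OF _ g(1)]
      by (simp add: mem_Alt_iff permutes_inv evenperm_inv)
    moreover have "map (inv g) ys = xs"
      using g(3) permutes_inv_o(2)[OF g(1)] by auto
    ultimately show ?thesis
      unfolding same_orbit_def by blast
  qed
  then show ?thesis by blast
qed

lemma same_orbit_Alt_butlast_tl:
  assumes "distinct xs" "set xs = {1..n}" "n \<ge> 1"
  shows "same_orbit (Alt n) (butlast xs) (tl xs) \<longleftrightarrow> odd n"
proof -
  define c where "c = cycle_of_list xs"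
  have xs_ne: "xs \<noteq> []" and len: "length xs = n"
    using assms by (auto simp: distinct_card[symmetric])
  have c_permutes: "c permutes {1..n}"
    unfolding c_def using cycle_permutes assms(2) by metis
  have c_even: "evenperm c \<longleftrightarrow> odd n"
    unfolding c_def using evenperm_cycle_of_list assms(1) xs_ne len by blast
  have "map c xs = tl xs @ [hd xs]"
    using cyclic_rotation[of xs 1] assms(1) xs_ne unfolding c_def by (simp add: rotate1_hd_tl)
  then have c_window: "map c (butlast xs) = tl xs"
    by (metis map_butlast butlast_snoc)
  show ?thesis
  proof
    assume "same_orbit (Alt n) (butlast xs) (tl xs)"
    then obtain g where g: "g permutes {1..n}" "evenperm g" "map g (butlast xs) = tl xs"
      by (auto simp: same_orbit_def mem_Alt_iff)
    have "set (butlast xs) = {1..n} - {last xs}"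
    proof -
      have "distinct (butlast xs @ [last xs])" "set (butlast xs @ [last xs]) = {1..n}"
        unfolding append_butlast_last_id[OF xs_ne] using assms(1,2) by simp_all
      then show ?thesis by auto
    qed
    moreover have "\<forall>x\<in>set (butlast xs). g x = c x"
      using g(3) c_window by (metis map_eq_conv)
    ultimately have "g = c"
      using permutes_eq_if_agree_except_one[OF g(1) c_permutes, of "last xs"] by simp
    then show "odd n"
      using g(2) c_even by simp
  next
    assume "odd n"
    then have "c \<in> Alt n"
      using c_permutes c_even by (simp add: mem_Alt_iff)
    then show "same_orbit (Alt n) (butlast xs) (tl xs)"
      using c_window unfolding same_orbit_def by blast
  qed
qed

lemma is_sequencing_Alt_iff:
  assumes "n \<ge> 2"
  shows "is_sequencing (Alt n) {1..n} (n - 2) xs \<longleftrightarrow> distinct xs \<and> set xs = {1..n} \<and> even n"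
proof (cases "distinct xs \<and> set xs = {1..n}")
  case True
  then have len: "length xs = n"
    by (metis distinct_card card_atLeastAtMost diff_Suc_1)
  have "n - 2 + 1 = length xs - 1"
    using assms len by simp
  then have windows: "length xs - (n - 2) = 2" "take (n - 2 + 1) (drop 0 xs) = butlast xs"
      "take (n - 2 + 1) (drop 1 xs) = tl xs"
    using assms len by (auto simp: butlast_conv_take drop_Suc)
  have two_windows: "(\<forall>i<2. \<forall>j<2. i \<noteq> j \<longrightarrow> P i j) \<longleftrightarrow> P 0 1 \<and> P 1 0"
    for P :: "nat \<Rightarrow> nat \<Rightarrow> bool"
    by (auto simp: less_2_cases_iff)
  show ?thesis
    using True same_orbit_Alt_butlast_tl[of xs n] same_orbit_Alt_sym assms
    unfolding is_sequencing_def windows(1) two_windows windows(2,3) by simp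
qed (auto simp: is_sequencing_def)

theorem theorem4p1:
  fixes n :: nat
  assumes "n \<ge> 2"
  shows "sharply_transitive (Alt n) {1..n} (n - 2)
    \<and> ((\<exists>xs. is_sequencing (Alt n) {1..n} (n - 2) xs) \<longleftrightarrow> even n)
    \<and> (even n \<longrightarrow> (\<forall>xs. distinct xs \<and> set xs = {1..n} \<longrightarrow> is_sequencing (Alt n) {1..n} (n - 2) xs))"
proof -
  have "distinct [1..<n+1] \<and> set [1..<n+1] = {1..n}"
    by auto
  then show ?thesis
    using sharply_transitive_Alt[OF assms] is_sequencing_Alt_iff[OF assms] by blast
qed

end
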